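(* Let $\mathcal{W}$ be a non-empty, compact and convex subset of $\mathbb{R}^m$, and consider the geometric mixture $\textsc{geo}$ with parameter space $\mathcal{W}$. Then for every probability matrix $\mathbf{P}$ over $\mathcal{P}_+$ and every $x\in\mathcal{X}$, the function $\mathbf{w}\mapsto\ell(x,\textsc{geo}(\mathbf{w},\mathbf{P}))$ is convex and differentiable on $\mathcal{W}$, and for all $\mathbf{w}\in\mathcal{W}$ $$\lvert\nabla_{\mathbf{w}}\ell(x,\textsc{geo}(\mathbf{w},\mathbf{P}))\rvert^2\le a\,\ell(x,\textsc{geo}(\mathbf{w},\mathbf{P}))$$ for every $a\ge\frac{m}{\log_2 e}\log_2^2\!\big(p_{\max}(\mathbf{P})/p_{\min}(\mathbf{P})\big)$. In particular $\textsc{geo}$ satisfies the properties of a nice mixture, with the constant in the gradient condition given by this bound.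
   Context: $\mathcal{X}=\{1,\dots,N\}$, $1<N<\infty$; $\mathcal{P}_+$ is the set of distributions on $\mathcal{X}$ with positive probability on each letter; $m>1$. A probability matrix over $\mathcal{P}_+$ is $\mathbf{P}=(\mathbf{p}(1)\cdots\mathbf{p}(N))$ with $\mathbf{p}(x)=(p_1(x),\dots,p_m(x))^{\mathsf T}$, $p_i\in\mathcal{P}_+$. $p_{\max}(\mathbf{P}):=\max_{x\in\mathcal{X}}\max_{1\le i\le m}p_i(x)$, $p_{\min}(\mathbf{P}):=\min_{x\in\mathcal{X}}\min_{1\le i\le m}p_i(x)$. $\ell(x,p):=-\log_2p(x)$. The geometric mixture is $\textsc{geo}(x;\mathbf{w},\mathbf{P}):=\prod_{i=1}^mp_i(x)^{w_i}\big/\sum_{y\in\mathcal{X}}\prod_{i=1}^mp_i(y)^{w_i}$ for $\mathbf{w}\in\mathbb{R}^m$. A mixture with parameter space $\mathcal{W}$ is nice if $\mathcal{W}$ is non-empty, compact, convex, $\mathbf{w}\mapsto\ell(x,\textsc{mix}(\mathbf{w},\mathbf{P}))$ is convex and differentiable on $\mathcal{W}$ for all $\mathbf{P},x$, and there is $a>0$ with $\lvert\nabla_{\mathbf{w}}\ell(x,\textsc{mix}(\mathbf{w},\mathbf{P}))\rvert^2\le a\,\ell(x,\textsc{mix}(\mathbf{w},\mathbf{P}))$ for all $\mathbf{w},\mathbf{P},x$. *)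

theory Defs
  imports "HOL-Analysis.Analysis"
begin

text \<open>Alphabet X = {1..N}. Experts are indexed by a finite type 'm (so m = CARD('m)),
  a weight vector is w :: real^'m, and a probability matrix is P :: 'm => nat => real,
  P i = p_i, a distribution on {1..N}.\<close>

definition prob_matrix_pos :: "nat \<Rightarrow> ('m::finite \<Rightarrow> nat \<Rightarrow> real) \<Rightarrow> bool" where
  "prob_matrix_pos N P \<longleftrightarrow>
     (\<forall>i. (\<forall>x\<in>{1..N}. 0 < P i x) \<and> (\<Sum>x=1..N. P i x) = 1)"

definition p_max :: "nat \<Rightarrow> ('m::finite \<Rightarrow> nat \<Rightarrow> real) \<Rightarrow> real" where
  "p_max N P = Max {P i x | i x. x \<in> {1..N}}"

definition p_min :: "nat \<Rightarrow> ('m::finite \<Rightarrow> nat \<Rightarrow> real) \<Rightarrow> real" where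
  "p_min N P = Min {P i x | i x. x \<in> {1..N}}"

definition code_len :: "nat \<Rightarrow> (nat \<Rightarrow> real) \<Rightarrow> real" where
  "code_len x p = - log 2 (p x)"

definition geo :: "nat \<Rightarrow> ('m::finite \<Rightarrow> nat \<Rightarrow> real) \<Rightarrow> real^'m \<Rightarrow> nat \<Rightarrow> real" where
  "geo N P w x = (\<Prod>i\<in>UNIV. P i x powr (w $ i)) / (\<Sum>y=1..N. \<Prod>i\<in>UNIV. P i y powr (w $ i))"

end

theory Submission
  imports Defs
begin

text \<open>With \<open>c\<^sub>y = (ln p\<^sub>1(y), \<dots>, ln p\<^sub>m(y))\<close>, the geometric mixture is the softmax of the
  linear scores \<open>w \<bullet> c\<^sub>y\<close>, so \<open>\<ell>(x, geo(w,P))\<close> is the log-partition function minus the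
  linear function \<open>w \<bullet> c\<^sub>x\<close>, divided by \<open>ln 2\<close>: convex (log-sum-exp is convex) and smooth.
  Its gradient is \<open>(E\<^sub>q c\<^sub>y - c\<^sub>x) / ln 2\<close> for the softmax weights \<open>q\<close>; every coordinate of
  \<open>E\<^sub>q c\<^sub>y - c\<^sub>x\<close> is at most \<open>(1 - q\<^sub>x) ln (p_max / p_min)\<close> in absolute value, and
  \<open>(1 - q\<^sub>x)\<^sup>2 \<le> 1 - q\<^sub>x \<le> - ln q\<^sub>x\<close> turns the squared norm bound into a multiple of the code length.\<close>

definition log_partition :: "'b set \<Rightarrow> ('b \<Rightarrow> 'a::real_inner) \<Rightarrow> 'a \<Rightarrow> real" where
  "log_partition A v w = ln (\<Sum>y\<in>A. exp (w \<bullet> v y))"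

definition softmax :: "'b set \<Rightarrow> ('b \<Rightarrow> 'a::real_inner) \<Rightarrow> 'a \<Rightarrow> 'b \<Rightarrow> real" where
  "softmax A v w y = exp (w \<bullet> v y) / (\<Sum>z\<in>A. exp (w \<bullet> v z))"

lemma sum_exp_inner_pos: "finite A \<Longrightarrow> A \<noteq> {} \<Longrightarrow> 0 < (\<Sum>y\<in>A. exp (w \<bullet> v y))"
  by (intro sum_pos) auto

lemma softmax_pos: "finite A \<Longrightarrow> A \<noteq> {} \<Longrightarrow> 0 < softmax A v w y"
  unfolding softmax_def using sum_exp_inner_pos by (intro divide_pos_pos) auto

lemma sum_softmax: "finite A \<Longrightarrow> A \<noteq> {} \<Longrightarrow> (\<Sum>y\<in>A. softmax A v w y) = 1"
  unfolding softmax_def using sum_exp_inner_pos[of A w v]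
  by (simp add: sum_divide_distrib[symmetric])

lemma softmax_le_1: "finite A \<Longrightarrow> y \<in> A \<Longrightarrow> softmax A v w y \<le> 1"
  unfolding softmax_def
  by (subst divide_le_eq_1_pos) (auto intro: sum_exp_inner_pos member_le_sum)

lemma ln_softmax:
  "finite A \<Longrightarrow> A \<noteq> {} \<Longrightarrow> ln (softmax A v w y) = w \<bullet> v y - log_partition A v w"
  unfolding softmax_def log_partition_def
  by (simp add: ln_div sum_exp_inner_pos[of A w v, THEN less_imp_neq, symmetric])

lemma convex_on_log_partition:
  assumes "finite A" "A \<noteq> {}" "convex S"
  shows "convex_on S (log_partition A v)"
proof (rule convex_onI[OF _ assms(3)])
  fix t :: real and u w
  assume t: "0 < t" "t < 1"
  define Su where "Su = (\<Sum>y\<in>A. exp (u \<bullet> v y))"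
  define Sw where "Sw = (\<Sum>y\<in>A. exp (w \<bullet> v y))"
  have Su: "Su > 0" and Sw: "Sw > 0"
    unfolding Su_def Sw_def using assms by (auto intro: sum_exp_inner_pos)
  define K where "K = (1 - t) * ln Su + t * ln Sw"
  txt \<open>After normalising by the two partition sums, convexity of \<open>exp\<close> suffices.\<close>
  have "(\<Sum>y\<in>A. exp (((1 - t) *\<^sub>R u + t *\<^sub>R w) \<bullet> v y))
      = exp K * (\<Sum>y\<in>A. exp ((1 - t) * (u \<bullet> v y - ln Su) + t * (w \<bullet> v y - ln Sw)))"
    by (simp add: sum_distrib_left K_def inner_add_left algebra_simps flip: exp_add)
  also have "\<dots> \<le> exp K * (\<Sum>y\<in>A. (1 - t) * exp (u \<bullet> v y - ln Su) + t * exp (w \<bullet> v y - ln Sw))"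
    using t convex_onD[OF exp_convex] by (intro mult_left_mono sum_mono) auto
  also have "(\<Sum>y\<in>A. (1 - t) * exp (u \<bullet> v y - ln Su) + t * exp (w \<bullet> v y - ln Sw)) = 1"
    using Su Sw
    by (simp add: sum.distrib exp_diff flip: sum_distrib_left sum_divide_distrib Su_def Sw_def)
  finally have "(\<Sum>y\<in>A. exp (((1 - t) *\<^sub>R u + t *\<^sub>R w) \<bullet> v y)) \<le> exp K" by simp
  from ln_mono[OF this sum_exp_inner_pos[OF assms(1,2)]]
  have "log_partition A v ((1 - t) *\<^sub>R u + t *\<^sub>R w) \<le> K"
    unfolding log_partition_def by simp
  then show "log_partition A v ((1 - t) *\<^sub>R u + t *\<^sub>R w)
      \<le> (1 - t) * log_partition A v u + t * log_partition A v w"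
    by (simp add: K_def log_partition_def Su_def Sw_def)
qed

lemma concave_on_inner_left: "convex S \<Longrightarrow> concave_on S (\<lambda>w. w \<bullet> a)"
  by (simp add: concave_on_iff inner_add_left)

lemma has_derivative_log_partition:
  assumes "finite A" "A \<noteq> {}"
  shows "(log_partition A v has_derivative (\<lambda>h. h \<bullet> (\<Sum>y\<in>A. softmax A v w y *\<^sub>R v y))) (at w)"
proof -
  have "((\<lambda>w. \<Sum>y\<in>A. exp (w \<bullet> v y)) has_derivative (\<lambda>h. \<Sum>y\<in>A. exp (w \<bullet> v y) * (h \<bullet> v y))) (at w)"
    by (auto intro!: derivative_eq_intros simp: mult.commute)
  from has_derivative_ln[OF sum_exp_inner_pos[OF assms] this] show ?thesis
    unfolding log_partition_def softmax_def
    by (rule has_derivative_eq_rhs) (simp add: inner_sum_right sum_distrib_left field_simps)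
qed

lemma GDERIV_unique:
  assumes "GDERIV f w :> g" "GDERIV f w :> g'"
  shows "g = g'"
proof -
  have "(\<lambda>h. h \<bullet> g) = (\<lambda>h. h \<bullet> g')"
    using has_derivative_unique assms unfolding gderiv_def by blast
  from fun_cong[OF this, of "g - g'"] have "(g - g') \<bullet> (g - g') = 0"
    by (simp only: inner_diff_right)
  then show ?thesis
    by simp
qed

lemma GDERIV_divide_constD:
  assumes "GDERIV (\<lambda>w. f w / c) w :> g" "c \<noteq> 0"
  shows "GDERIV f w :> c *\<^sub>R g"
  using has_derivative_mult_right[OF assms(1)[unfolded gderiv_def], of c] assms(2)
  unfolding gderiv_def by (simp add: mult.commute)

lemma convex_on_neg_ln_softmax:
  "finite A \<Longrightarrow> A \<noteq> {} \<Longrightarrow> convex S \<Longrightarrow> convex_on S (\<lambda>w. - ln (softmax A v w x))"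
  by (simp add: ln_softmax convex_on_diff convex_on_log_partition concave_on_inner_left)

lemma GDERIV_neg_ln_softmax:
  assumes "finite A" "A \<noteq> {}"
  shows "GDERIV (\<lambda>w. - ln (softmax A v w x)) w :> (\<Sum>y\<in>A. softmax A v w y *\<^sub>R v y) - v x"
  unfolding gderiv_def ln_softmax[OF assms]
  by (auto intro!: derivative_eq_intros has_derivative_log_partition[OF assms]
           simp: inner_diff_right)

lemma abs_weighted_mean_diff_le:
  fixes q u :: "'b \<Rightarrow> real"
  assumes "finite A" "x \<in> A" "\<And>y. y \<in> A \<Longrightarrow> 0 \<le> q y" "(\<Sum>y\<in>A. q y) = 1"
    and "\<And>y. y \<in> A \<Longrightarrow> \<bar>u y - u x\<bar> \<le> L"
  shows "\<bar>\<Sum>y\<in>A. q y * (u y - u x)\<bar> \<le> (1 - q x) * L"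
proof -
  have "\<bar>\<Sum>y\<in>A. q y * (u y - u x)\<bar> = \<bar>\<Sum>y\<in>A - {x}. q y * (u y - u x)\<bar>"
    using assms(1,2) by (simp add: sum.remove)
  also have "\<dots> \<le> (\<Sum>y\<in>A - {x}. q y * L)"
    using assms(3,5) by (intro order_trans[OF sum_abs] sum_mono) (simp add: abs_mult mult_left_mono)
  also have "\<dots> = (1 - q x) * L"
    using assms(1,2,4) by (simp add: sum_distrib_right[symmetric] sum_diff1)
  finally show ?thesis .
qed

lemma power2_norm_le_card_cart:
  fixes z :: "real^'n" and B :: real
  assumes "\<And>i. \<bar>z $ i\<bar> \<le> B"
  shows "(norm z)\<^sup>2 \<le> CARD('n) * B\<^sup>2"
proof -
  have "(norm z)\<^sup>2 = (\<Sum>i\<in>UNIV. (z $ i)\<^sup>2)"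
    unfolding power2_norm_eq_inner inner_vec_def by (simp add: power2_eq_square)
  also have "\<dots> \<le> (\<Sum>i\<in>(UNIV::'n set). B\<^sup>2)"
    using power_mono[OF assms abs_ge_zero, of _ 2] by (intro sum_mono) simp
  finally show ?thesis by simp
qed

lemma power2_norm_GDERIV_neg_ln_softmax_le:
  fixes v :: "'b \<Rightarrow> real^'n" and L :: real
  assumes "finite A" "x \<in> A" "\<And>y i. y \<in> A \<Longrightarrow> \<bar>v y $ i - v x $ i\<bar> \<le> L"
    and "GDERIV (\<lambda>w. - ln (softmax A v w x)) w :> g"
  shows "(norm g)\<^sup>2 \<le> CARD('n) * L\<^sup>2 * - ln (softmax A v w x)"
proof -
  define q where "q = softmax A v w x"
  have A: "A \<noteq> {}" using assms(2) by blast
  have g: "g = (\<Sum>y\<in>A. softmax A v w y *\<^sub>R v y) - v x"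
    using GDERIV_unique[OF assms(4) GDERIV_neg_ln_softmax[OF assms(1) A]] .
  have q: "0 < q" "q \<le> 1" unfolding q_def using assms(1,2) A by (auto intro: softmax_pos softmax_le_1)
  have "\<bar>g $ i\<bar> \<le> (1 - q) * L" for i
  proof -
    have "g $ i = (\<Sum>y\<in>A. softmax A v w y * (v y $ i - v x $ i))"
      using sum_softmax[OF assms(1) A, of v w] unfolding g
      by (simp add: sum_component right_diff_distrib sum_subtractf flip: sum_distrib_right)
    then show ?thesis unfolding q_def
      using assms A by (auto intro!: abs_weighted_mean_diff_le sum_softmax less_imp_le[OF softmax_pos])
  qed
  then have "(norm g)\<^sup>2 \<le> CARD('n) * ((1 - q) * L)\<^sup>2"
    by (rule power2_norm_le_card_cart)
  also have "\<dots> = CARD('n) * L\<^sup>2 * (1 - q)\<^sup>2"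
    by (simp add: power_mult_distrib)
  also have "\<dots> \<le> CARD('n) * L\<^sup>2 * (1 - q)"
    using q by (intro mult_left_mono) (auto simp: power2_eq_square mult_left_le)
  also have "\<dots> \<le> CARD('n) * L\<^sup>2 * - ln q"
    using q ln_le_minus_one[OF q(1)] by (intro mult_left_mono) auto
  finally show ?thesis unfolding q_def .
qed

lemma abs_ln_diff_le_ln_divide:
  fixes a b s t :: real
  assumes "0 < a" "a \<le> s" "s \<le> b" "a \<le> t" "t \<le> b"
  shows "\<bar>ln s - ln t\<bar> \<le> ln (b / a)"
proof -
  have "ln a \<le> ln s" "ln s \<le> ln b" "ln a \<le> ln t" "ln t \<le> ln b"
    using assms by (auto intro: ln_mono)
  then have "\<bar>ln s - ln t\<bar> \<le> ln b - ln a"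
    by (simp add: abs_le_iff)
  with assms show ?thesis
    by (simp add: ln_div)
qed

lemma prod_powr_eq_exp_inner:
  fixes w :: "real^'n"
  assumes "\<And>i. 0 < p i"
  shows "(\<Prod>i\<in>UNIV. p i powr (w $ i)) = exp (w \<bullet> (\<chi> i. ln (p i)))"
  using assms by (simp add: powr_def exp_sum inner_vec_def mult.commute less_imp_neq[symmetric])

lemma geo_eq_softmax:
  assumes "prob_matrix_pos N P" "y \<in> {1..N}"
  shows "geo N P w y = softmax {1..N} (\<lambda>y. \<chi> i. ln (P i y)) w y"
proof -
  have "(\<Prod>i\<in>UNIV. P i z powr (w $ i)) = exp (w \<bullet> (\<chi> i. ln (P i z)))" if "z \<in> {1..N}" for z
    using assms(1) that unfolding prob_matrix_pos_def by (intro prod_powr_eq_exp_inner) blast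
  then show ?thesis
    unfolding geo_def softmax_def using assms(2) by simp
qed

lemma prob_matrix_pos_p_min_p_max:
  assumes "prob_matrix_pos N P" "y \<in> {1..N}"
  shows "0 < p_min N P" "p_min N P \<le> P i y" "P i y \<le> p_max N P"
proof -
  define Q where "Q = {P i y | i y. y \<in> {1..N}}"
  have "Q = (\<lambda>(i, y). P i y) ` (UNIV \<times> {1..N})"
    unfolding Q_def by (auto; force)
  then have "finite Q" "Q \<noteq> {}"
    using assms(2) by auto
  moreover have "P i y \<in> Q"
    unfolding Q_def using assms(2) by blast
  moreover have "\<forall>q\<in>Q. 0 < q"
    using assms(1) unfolding Q_def prob_matrix_pos_def by blast
  ultimately show "0 < p_min N P" "p_min N P \<le> P i y" "P i y \<le> p_max N P"
    unfolding p_min_def p_max_def Q_def[symmetric] by auto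
qed

lemma abs_ln_prob_diff_le:
  assumes "prob_matrix_pos N P" "x \<in> {1..N}" "y \<in> {1..N}"
  shows "\<bar>ln (P i y) - ln (P i x)\<bar> \<le> ln (p_max N P / p_min N P)"
  using prob_matrix_pos_p_min_p_max[OF assms(1)] assms(2,3)
  by (auto intro: abs_ln_diff_le_ln_divide)

context
  fixes N :: nat and P :: "'m::finite \<Rightarrow> nat \<Rightarrow> real" and x :: nat
  assumes P: "prob_matrix_pos N P" and x: "x \<in> {1..N}"
begin

private abbreviation (input) log_probs :: "nat \<Rightarrow> real^'m" where
  "log_probs y \<equiv> \<chi> i. ln (P i y)"

lemma code_len_geo_eq: "code_len x (geo N P w) = - ln (softmax {1..N} log_probs w x) / ln 2"
  unfolding code_len_def log_def geo_eq_softmax[OF P x] by simp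

lemma convex_on_code_len_geo: "convex S \<Longrightarrow> convex_on S (\<lambda>w. code_len x (geo N P w))"
  using x unfolding code_len_geo_eq by (intro convex_on_cdiv convex_on_neg_ln_softmax) auto

lemma differentiable_code_len_geo: "(\<lambda>w. code_len x (geo N P w)) differentiable (at w)"
proof -
  have "(\<lambda>w. - ln (softmax {1..N} log_probs w x)) differentiable (at w)"
    using GDERIV_neg_ln_softmax[of "{1..N}"] x unfolding gderiv_def differentiable_def by blast
  then show ?thesis
    unfolding code_len_geo_eq by (intro differentiable_divide) auto
qed

lemma code_len_geo_nonneg: "0 \<le> code_len x (geo N P w)"
  using softmax_pos[of "{1..N}" log_probs w x] softmax_le_1[of "{1..N}" x log_probs w] x
  unfolding code_len_geo_eq by (auto simp: divide_nonpos_pos)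

lemma power2_norm_GDERIV_code_len_geo_le:
  assumes "GDERIV (\<lambda>w. code_len x (geo N P w)) w :> g"
  shows "(norm g)\<^sup>2 \<le> CARD('m) * (ln (p_max N P / p_min N P))\<^sup>2 / ln 2 * code_len x (geo N P w)"
proof -
  have "GDERIV (\<lambda>w. - ln (softmax {1..N} log_probs w x)) w :> ln 2 *\<^sub>R g"
    using assms unfolding code_len_geo_eq by (rule GDERIV_divide_constD) simp
  from power2_norm_GDERIV_neg_ln_softmax_le[OF _ x _ this] abs_ln_prob_diff_le[OF P x]
  have "(ln 2)\<^sup>2 * (norm g)\<^sup>2 \<le> CARD('m) * (ln (p_max N P / p_min N P))\<^sup>2 * (ln 2 * code_len x (geo N P w))"
    unfolding code_len_geo_eq by (simp add: power_mult_distrib)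
  then show ?thesis
    by (simp add: field_simps power2_eq_square)
qed

end

theorem lemma1:
  fixes N :: nat and W :: "(real^'m::finite) set"
    and P :: "'m \<Rightarrow> nat \<Rightarrow> real" and x :: nat
  assumes "1 < N" and "CARD('m) > 1"
    and "W \<noteq> {}" and "compact W" and "convex W"
    and "prob_matrix_pos N P" and "x \<in> {1..N}"
  shows "convex_on W (\<lambda>w. code_len x (geo N P w))
       \<and> (\<forall>w\<in>W. (\<lambda>w. code_len x (geo N P w)) differentiable (at w))
       \<and> (\<forall>a. a \<ge> real CARD('m) / log 2 (exp 1) * (log 2 (p_max N P / p_min N P))\<^sup>2 \<longrightarrow>
            (\<forall>w\<in>W. \<forall>g. GDERIV (\<lambda>w. code_len x (geo N P w)) w :> g \<longrightarrow>
                 (norm g)\<^sup>2 \<le> a * code_len x (geo N P w)))"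
proof (intro conjI allI impI ballI)
  show "convex_on W (\<lambda>w. code_len x (geo N P w))"
    using convex_on_code_len_geo[OF assms(6,7,5)] .
  show "(\<lambda>w. code_len x (geo N P w)) differentiable (at w)" for w
    using differentiable_code_len_geo[OF assms(6,7)] .
next
  fix a w g
  assume a: "a \<ge> real CARD('m) / log 2 (exp 1) * (log 2 (p_max N P / p_min N P))\<^sup>2"
    and g: "GDERIV (\<lambda>w. code_len x (geo N P w)) w :> g"
  have "real CARD('m) / log 2 (exp 1) * (log 2 (p_max N P / p_min N P))\<^sup>2
      = CARD('m) * (ln (p_max N P / p_min N P))\<^sup>2 / ln 2"
    by (simp add: log_def power_divide power2_eq_square)
  with a power2_norm_GDERIV_code_len_geo_le[OF assms(6,7) g] code_len_geo_nonneg[OF assms(6,7)]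
  show "(norm g)\<^sup>2 \<le> a * code_len x (geo N P w)"
    by (metis mult_right_mono order_trans)
qed

end
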